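(* Let $G=(V,E)$ be a finite graph with $V=\{1,\dots,n\}$, special vertex $i\in V$, symmetric edge weights $w_E:V\times V\to[0,\infty)$ with $w_E(u,v)=0$ whenever $uv\notin E$, and vertex weights $w_V:V\to[0,\infty)$ not identically zero. Suppose $G$ is positively connected. Then a function $g:V\to\mathbb{R}$ with $g(i)=0$ and $\|g\|_w=1$ is a solution of $$\min_{\|g\|_w=1,\ g(i)=0}\ \sum_{jk\in E} w_E(j,k)\,(g(k)-g(j))^2$$ if and only if the vector $(g(j))_{j\in V\setminus\{i\}}$ is an eigenvector of $L_i^{-1}W_{V,i}$ associated with its largest eigenvalue.
   Context: $\|g\|_w=\sqrt{\sum_{u\in V}w_V(u)g(u)^2}$. Each edge is counted once in the sum. $L=D-W_E$ is the weighted Laplacian, where $W_E=(w_E(u,v))$ and $D$ is diagonal with $d(k)=\sum_j w_E(k,j)$; $L_i$ is $L$ with row and column $i$ deleted (it is invertible when $G$ is positively connected); $W_{V,i}$ is the diagonal matrix of $w_V$ with row and column $i$ deleted. $G$ is positively connected if any two vertices are joined by a path all of whose edges have positive weight. The eigenvalues of $L_i^{-1}W_{V,i}$ are real. *)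

theory Defs
  imports "Jordan_Normal_Form.Char_Poly" "Jordan_Normal_Form.Gauss_Jordan_Elimination"
begin

(* Vertices are {0..<n} (0-based version of {1,...,n}); edges are 2-element subsets. *)

definition simple_graph :: "nat \<Rightarrow> nat set set \<Rightarrow> bool" where
  "simple_graph n E \<longleftrightarrow> (\<forall>e\<in>E. e \<subseteq> {0..<n} \<and> card e = 2)"

definition wnorm :: "nat \<Rightarrow> (nat \<Rightarrow> real) \<Rightarrow> (nat \<Rightarrow> real) \<Rightarrow> real" where
  "wnorm n wV g = sqrt (\<Sum>u\<in>{0..<n}. wV u * (g u)^2)"

(* each edge {j,k} counted once *)
definition energy :: "nat set set \<Rightarrow> (nat \<Rightarrow> nat \<Rightarrow> real) \<Rightarrow> (nat \<Rightarrow> real) \<Rightarrow> real" where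
  "energy E wE g = (\<Sum>e\<in>E. (\<Sum>(j,k)\<in>{(j,k). e = {j,k} \<and> j < k}. wE j k * (g k - g j)^2))"

definition positively_connected :: "nat \<Rightarrow> (nat \<Rightarrow> nat \<Rightarrow> real) \<Rightarrow> bool" where
  "positively_connected n wE \<longleftrightarrow>
     (\<forall>u\<in>{0..<n}. \<forall>v\<in>{0..<n}.
        (\<lambda>x y. x < n \<and> y < n \<and> wE x y > 0)\<^sup>*\<^sup>* u v)"

definition laplacian :: "nat \<Rightarrow> (nat \<Rightarrow> nat \<Rightarrow> real) \<Rightarrow> real mat" where
  "laplacian n wE = mat n n (\<lambda>(k,j). (if k = j then (\<Sum>l\<in>{0..<n}. wE k l) else 0) - wE k j)"

definition vweight_mat :: "nat \<Rightarrow> (nat \<Rightarrow> real) \<Rightarrow> real mat" where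
  "vweight_mat n wV = mat n n (\<lambda>(k,j). if k = j then wV k else 0)"

(* index r of the reduced object corresponds to vertex skip i r *)
definition skip :: "nat \<Rightarrow> nat \<Rightarrow> nat" where
  "skip i r = (if r < i then r else r + 1)"

definition del_rc :: "nat \<Rightarrow> 'a mat \<Rightarrow> 'a mat" where
  "del_rc i A = mat (dim_row A - 1) (dim_col A - 1) (\<lambda>(r,c). A $$ (skip i r, skip i c))"

definition del_vec :: "nat \<Rightarrow> nat \<Rightarrow> (nat \<Rightarrow> real) \<Rightarrow> real vec" where
  "del_vec n i g = vec (n - 1) (\<lambda>r. g (skip i r))"

definition minimizer :: "nat \<Rightarrow> nat set set \<Rightarrow> (nat \<Rightarrow> nat \<Rightarrow> real) \<Rightarrow> (nat \<Rightarrow> real) \<Rightarrow> nat \<Rightarrow> (nat \<Rightarrow> real) \<Rightarrow> bool" where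
  "minimizer n E wE wV i g \<longleftrightarrow> wnorm n wV g = 1 \<and> g i = 0 \<and>
     (\<forall>h. wnorm n wV h = 1 \<and> h i = 0 \<longrightarrow> energy E wE g \<le> energy E wE h)"

end

theory Submission
  imports Defs "HOL-Analysis.Function_Topology"
begin

text \<open>
  On functions vanishing at the root \<open>i\<close> the energy is the Dirichlet form
  \<open>Q g = \<Sum>\<^sub>k g k * (L g) k\<close>, and positive connectivity bounds every value
  \<open>\<bar>g v\<bar>\<close> by \<open>C * sqrt (Q g)\<close>. Hence \<open>Q\<close> is positive definite (so L_i is invertible)
  and its sublevel sets on the sphere \<open>N g = 1\<close> are compact, so a minimizer exists.
  Perturbing a minimizer \<open>g\<close> gives the Euler--Lagrange equation \<open>L g = \<mu> W g\<close> off \<open>i\<close>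
  with \<open>\<mu> = Q g > 0\<close>: the reduced vector of \<open>g\<close> is an eigenvector of L_i^{-1} W_{V,i}
  for \<open>1/\<mu>\<close>. Conversely an eigenpair \<open>(\<lambda>, h)\<close> satisfies \<open>N h = \<lambda> Q h\<close>, and the
  Rayleigh bound \<open>\<mu> N h \<le> Q h\<close> gives \<open>\<lambda> \<le> 1/\<mu>\<close>. So \<open>1/\<mu>\<close> is the largest
  eigenvalue, and any unit \<open>g\<close> whose reduced vector is an eigenvector for it has
  \<open>Q g = \<mu>\<close>, i.e. is a minimizer.
\<close>

definition dirichlet_form :: "nat \<Rightarrow> (nat \<Rightarrow> nat \<Rightarrow> real) \<Rightarrow> (nat \<Rightarrow> real) \<Rightarrow> real" where
  "dirichlet_form n wE h = (\<Sum>j\<in>{0..<n}. \<Sum>k\<in>{0..<n}. wE j k * (h k - h j)^2) / 2"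

definition wsq_norm :: "nat \<Rightarrow> (nat \<Rightarrow> real) \<Rightarrow> (nat \<Rightarrow> real) \<Rightarrow> real" where
  "wsq_norm n wV h = (\<Sum>u\<in>{0..<n}. wV u * (h u)^2)"

definition laplace_op :: "nat \<Rightarrow> (nat \<Rightarrow> nat \<Rightarrow> real) \<Rightarrow> (nat \<Rightarrow> real) \<Rightarrow> nat \<Rightarrow> real" where
  "laplace_op n wE h k = (\<Sum>l\<in>{0..<n}. wE k l * (h k - h l))"

definition dirichlet_minimizer ::
    "nat \<Rightarrow> (nat \<Rightarrow> nat \<Rightarrow> real) \<Rightarrow> (nat \<Rightarrow> real) \<Rightarrow> nat \<Rightarrow> (nat \<Rightarrow> real) \<Rightarrow> bool" where
  "dirichlet_minimizer n wE wV i g \<longleftrightarrow> g i = 0 \<and> wsq_norm n wV g = 1 \<and>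
     (\<forall>h. h i = 0 \<longrightarrow> wsq_norm n wV h = 1 \<longrightarrow> dirichlet_form n wE g \<le> dirichlet_form n wE h)"

lemma sum_mult_laplace_op:
  assumes wE_sym: "\<And>u v. u < n \<Longrightarrow> v < n \<Longrightarrow> wE u v = wE v u"
  shows "(\<Sum>k\<in>{0..<n}. h k * laplace_op n wE g k) =
    (\<Sum>j\<in>{0..<n}. \<Sum>k\<in>{0..<n}. wE j k * (h k - h j) * (g k - g j)) / 2"
proof -
  let ?S = "\<Sum>k\<in>{0..<n}. \<Sum>l\<in>{0..<n}. wE k l * h k * (g k - g l)"
  have lhs: "(\<Sum>k\<in>{0..<n}. h k * laplace_op n wE g k) = ?S"
    unfolding laplace_op_def by (simp add: sum_distrib_left algebra_simps)
  have "?S = (\<Sum>l\<in>{0..<n}. \<Sum>k\<in>{0..<n}. wE k l * h k * (g k - g l))"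
    by (rule sum.swap)
  also have "\<dots> = (\<Sum>l\<in>{0..<n}. \<Sum>k\<in>{0..<n}. - (wE l k * h k * (g l - g k)))"
    by (intro sum.cong refl) (simp add: wE_sym algebra_simps)
  finally have swapped: "?S = - (\<Sum>j\<in>{0..<n}. \<Sum>k\<in>{0..<n}. wE j k * h k * (g j - g k))"
    by (simp add: sum_negf)
  have "(\<Sum>j\<in>{0..<n}. \<Sum>k\<in>{0..<n}. wE j k * (h k - h j) * (g k - g j)) =
        (\<Sum>j\<in>{0..<n}. \<Sum>k\<in>{0..<n}. wE j k * h j * (g j - g k)) -
        (\<Sum>j\<in>{0..<n}. \<Sum>k\<in>{0..<n}. wE j k * h k * (g j - g k))"
    by (simp add: sum_subtractf[symmetric] algebra_simps)
  with lhs swapped show ?thesis by simp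
qed

lemma dirichlet_form_eq_sum_laplace_op:
  assumes "\<And>u v. u < n \<Longrightarrow> v < n \<Longrightarrow> wE u v = wE v u"
  shows "dirichlet_form n wE g = (\<Sum>k\<in>{0..<n}. g k * laplace_op n wE g k)"
  using sum_mult_laplace_op[of n wE g g, OF assms]
  unfolding dirichlet_form_def by (simp add: power2_eq_square mult.assoc)

lemma dirichlet_form_add_scaled:
  assumes "\<And>u v. u < n \<Longrightarrow> v < n \<Longrightarrow> wE u v = wE v u"
  shows "dirichlet_form n wE (\<lambda>x. g x + t * h x) = dirichlet_form n wE g
    + 2 * t * (\<Sum>k\<in>{0..<n}. h k * laplace_op n wE g k) + t^2 * dirichlet_form n wE h"
proof -
  have "dirichlet_form n wE (\<lambda>x. g x + t * h x) =
     (\<Sum>j\<in>{0..<n}. \<Sum>k\<in>{0..<n}. wE j k * (g k - g j)^2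
        + 2 * t * (wE j k * (h k - h j) * (g k - g j)) + t^2 * (wE j k * (h k - h j)^2)) / 2"
    unfolding dirichlet_form_def
    by (intro arg_cong[where f="\<lambda>x. x / 2"] sum.cong refl) (simp add: power2_eq_square algebra_simps)
  also have "\<dots> = dirichlet_form n wE g
      + 2 * t * ((\<Sum>j\<in>{0..<n}. \<Sum>k\<in>{0..<n}. wE j k * (h k - h j) * (g k - g j)) / 2)
      + t^2 * dirichlet_form n wE h"
    unfolding dirichlet_form_def by (simp add: sum.distrib sum_distrib_left add_divide_distrib)
  finally show ?thesis using sum_mult_laplace_op[of n wE h g, OF assms] by simp
qed

lemma wsq_norm_add_scaled:
  "wsq_norm n wV (\<lambda>x. g x + t * h x) = wsq_norm n wV g
    + 2 * t * (\<Sum>k\<in>{0..<n}. h k * (wV k * g k)) + t^2 * wsq_norm n wV h"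
  unfolding wsq_norm_def by (simp add: sum.distrib sum_distrib_left power2_eq_square algebra_simps)

lemma dirichlet_form_scale: "dirichlet_form n wE (\<lambda>x. c * h x) = c^2 * dirichlet_form n wE h"
  unfolding dirichlet_form_def by (simp add: sum_distrib_left power2_eq_square algebra_simps)

lemma wsq_norm_scale: "wsq_norm n wV (\<lambda>x. c * h x) = c^2 * wsq_norm n wV h"
  unfolding wsq_norm_def by (simp add: sum_distrib_left power2_eq_square algebra_simps)

lemma dirichlet_form_nonneg:
  assumes "\<And>u v. u < n \<Longrightarrow> v < n \<Longrightarrow> wE u v \<ge> 0"
  shows "dirichlet_form n wE h \<ge> 0"
  unfolding dirichlet_form_def using assms by (auto intro!: sum_nonneg)

lemma wsq_norm_nonneg:
  assumes "\<And>u. u < n \<Longrightarrow> wV u \<ge> 0"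
  shows "wsq_norm n wV h \<ge> 0"
  unfolding wsq_norm_def using assms by (auto intro!: sum_nonneg)

lemma dirichlet_form_ge_edge:
  assumes "\<And>u v. u < n \<Longrightarrow> v < n \<Longrightarrow> wE u v \<ge> 0" and "a < n" "b < n"
  shows "wE a b * (h b - h a)^2 / 2 \<le> dirichlet_form n wE h"
proof -
  have "wE a b * (h b - h a)^2 \<le> (\<Sum>k\<in>{0..<n}. wE a k * (h k - h a)^2)"
    using assms by (intro member_le_sum[of b "{0..<n}" "\<lambda>k. wE a k * (h k - h a)^2"]) auto
  also have "\<dots> \<le> (\<Sum>j\<in>{0..<n}. \<Sum>k\<in>{0..<n}. wE j k * (h k - h j)^2)"
    using assms by (intro member_le_sum[of a "{0..<n}" "\<lambda>j. \<Sum>k\<in>{0..<n}. wE j k * (h k - h j)^2"])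
      (auto intro!: sum_nonneg)
  finally show ?thesis unfolding dirichlet_form_def by (simp add: divide_right_mono)
qed

lemma dirichlet_form_cong: "(\<And>x. x < n \<Longrightarrow> g x = h x) \<Longrightarrow> dirichlet_form n wE g = dirichlet_form n wE h"
  unfolding dirichlet_form_def by (intro arg_cong[where f="\<lambda>x. x / 2"] sum.cong refl) auto

lemma wsq_norm_cong: "(\<And>x. x < n \<Longrightarrow> g x = h x) \<Longrightarrow> wsq_norm n wV g = wsq_norm n wV h"
  unfolding wsq_norm_def by (intro sum.cong refl) auto

lemma continuous_on_dirichlet_form: "continuous_on A (dirichlet_form n wE)"
  unfolding dirichlet_form_def
  by (intro continuous_intros continuous_on_subset[OF continuous_on_product_coordinates] subset_UNIV) simp

lemma continuous_on_wsq_norm: "continuous_on A (wsq_norm n wV)"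
  unfolding wsq_norm_def
  by (intro continuous_intros continuous_on_subset[OF continuous_on_product_coordinates] subset_UNIV)

lemma wsq_norm_eq_if_laplace_eigen:
  assumes "\<And>u v. u < n \<Longrightarrow> v < n \<Longrightarrow> wE u v = wE v u"
    and hi: "h i = 0" and eigen: "\<And>k. k < n \<Longrightarrow> k \<noteq> i \<Longrightarrow> wV k * h k = c * laplace_op n wE h k"
  shows "wsq_norm n wV h = c * dirichlet_form n wE h"
proof -
  have "wsq_norm n wV h = (\<Sum>k\<in>{0..<n}. h k * (wV k * h k))"
    unfolding wsq_norm_def by (intro sum.cong refl) (simp add: power2_eq_square algebra_simps)
  also have "\<dots> = (\<Sum>k\<in>{0..<n}. c * (h k * laplace_op n wE h k))"
    by (intro sum.cong refl) (metis atLeastLessThan_iff hi mult.left_commute mult_zero_left eigen)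
  also have "\<dots> = c * dirichlet_form n wE h"
    by (simp add: dirichlet_form_eq_sum_laplace_op[of n wE, OF assms(1)] sum_distrib_left)
  finally show ?thesis .
qed

lemma wnorm_eq_1_iff: "wnorm n wV h = 1 \<longleftrightarrow> wsq_norm n wV h = 1"
  unfolding wnorm_def wsq_norm_def by simp

lemma two_subset_eq_ordered_pair:
  assumes "e \<subseteq> {0..<(n::nat)}" "card e = 2"
  obtains a b where "a < b" "b < n" "e = {a, b}"
proof -
  obtain a b where ab: "a \<noteq> b" "e = {a, b}" using assms(2) by (auto simp: card_2_iff)
  then consider "a < b" | "b < a" by linarith
  then show ?thesis using ab assms(1) that by cases (auto simp: insert_commute)
qed

lemma energy_eq_dirichlet_form:
  assumes sg: "simple_graph n E"
    and wE_sym: "\<And>u v. u < n \<Longrightarrow> v < n \<Longrightarrow> wE u v = wE v u"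
    and off: "\<And>u v. u < n \<Longrightarrow> v < n \<Longrightarrow> {u, v} \<notin> E \<Longrightarrow> wE u v = 0"
  shows "energy E wE g = dirichlet_form n wE g"
proof -
  define F where "F = (\<lambda>(j,k). wE j k * (g k - g j)^2)"
  define P where "P = {(j,k). j < n \<and> k < n \<and> {j,k} \<in> E}"
  have "E \<subseteq> Pow {0..<n}" using sg unfolding simple_graph_def by auto
  hence finE: "finite E" by (rule finite_subset) simp
  have PS: "P \<subseteq> {0..<n} \<times> {0..<n}" unfolding P_def by auto
  hence finP: "finite P" by (rule finite_subset) simp
  have "(\<Sum>j\<in>{0..<n}. \<Sum>k\<in>{0..<n}. wE j k * (g k - g j)^2) = (\<Sum>p\<in>{0..<n} \<times> {0..<n}. F p)"
    unfolding F_def by (simp add: sum.cartesian_product)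
  also have "\<dots> = (\<Sum>p\<in>P. F p)"
    by (intro sum.mono_neutral_right finP PS) (auto simp: P_def F_def dest: off)
  also have "\<dots> = (\<Sum>e\<in>E. \<Sum>p\<in>{p\<in>P. {fst p, snd p} = e}. F p)"
    using finP finE by (intro sum.group[symmetric]) (auto simp: P_def)
  also have "\<dots> = (\<Sum>e\<in>E. 2 * (\<Sum>(j,k)\<in>{(j,k). e = {j,k} \<and> j < k}. wE j k * (g k - g j)^2))"
  proof (intro sum.cong refl)
    fix e assume e: "e \<in> E"
    with sg obtain a b where ab: "a < b" "b < n" "e = {a,b}"
      unfolding simple_graph_def using two_subset_eq_ordered_pair by metis
    have "{p\<in>P. {fst p, snd p} = e} = {(a,b),(b,a)}"
      using ab e unfolding P_def by (auto simp: doubleton_eq_iff insert_commute)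
    moreover have "{(j,k). e = {j,k} \<and> j < k} = {(a,b)}"
      using ab by (auto simp: doubleton_eq_iff)
    ultimately show "(\<Sum>p\<in>{p\<in>P. {fst p, snd p} = e}. F p)
        = 2 * (\<Sum>(j,k)\<in>{(j,k). e = {j,k} \<and> j < k}. wE j k * (g k - g j)^2)"
      using ab wE_sym[of a b] by (simp add: F_def power2_commute)
  qed
  also have "\<dots> = 2 * energy E wE g" unfolding energy_def by (rule sum_distrib_left[symmetric])
  finally show ?thesis unfolding dirichlet_form_def by simp
qed

lemma minimizer_iff_dirichlet_minimizer:
  assumes "simple_graph n E"
    and "\<And>u v. u < n \<Longrightarrow> v < n \<Longrightarrow> wE u v = wE v u"
    and "\<And>u v. u < n \<Longrightarrow> v < n \<Longrightarrow> {u, v} \<notin> E \<Longrightarrow> wE u v = 0"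
  shows "minimizer n E wE wV i g \<longleftrightarrow> dirichlet_minimizer n wE wV i g"
  using energy_eq_dirichlet_form[OF assms]
  unfolding minimizer_def dirichlet_minimizer_def wnorm_eq_1_iff by auto


lemma abs_le_dirichlet_form_if_path:
  assumes nonneg: "\<And>u v. u < n \<Longrightarrow> v < n \<Longrightarrow> wE u v \<ge> 0"
    and path: "(\<lambda>x y. x < n \<and> y < n \<and> wE x y > 0)\<^sup>*\<^sup>* i v"
  shows "\<exists>C\<ge>0. \<forall>h. h i = 0 \<longrightarrow> \<bar>h v\<bar> \<le> C * sqrt (dirichlet_form n wE h)"
  using path
proof (induction rule: rtranclp_induct)
  case base
  show ?case by (intro exI[of _ 0]) auto
next
  case (step a b)
  then obtain C where C: "C \<ge> 0" "\<And>h. h i = 0 \<Longrightarrow> \<bar>h a\<bar> \<le> C * sqrt (dirichlet_form n wE h)"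
    by blast
  define w where "w = wE a b"
  have w: "w > 0" "a < n" "b < n" using step(2) unfolding w_def by auto
  show ?case
  proof (intro exI[of _ "C + sqrt (2 / w)"] conjI allI impI)
    show "0 \<le> C + sqrt (2 / w)" using C w by simp
    fix h :: "nat \<Rightarrow> real" assume hi: "h i = 0"
    have "(h b - h a)^2 \<le> (2 / w) * dirichlet_form n wE h"
      using dirichlet_form_ge_edge[OF nonneg w(2,3), where h=h] w(1) unfolding w_def
      by (simp add: field_simps)
    hence "\<bar>h b - h a\<bar> \<le> sqrt (2 / w) * sqrt (dirichlet_form n wE h)"
      by (metis real_sqrt_abs real_sqrt_le_mono real_sqrt_mult)
    thus "\<bar>h b\<bar> \<le> (C + sqrt (2 / w)) * sqrt (dirichlet_form n wE h)"
      using C(2)[of h, OF hi] by (simp add: algebra_simps)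
  qed
qed

lemma positively_connected_abs_le_dirichlet_form:
  assumes nonneg: "\<And>u v. u < n \<Longrightarrow> v < n \<Longrightarrow> wE u v \<ge> 0"
    and "positively_connected n wE" and "i < n"
  obtains C where "C \<ge> 0" "\<And>v h. v < n \<Longrightarrow> h i = 0 \<Longrightarrow> \<bar>h v\<bar> \<le> C * sqrt (dirichlet_form n wE h)"
proof -
  have "\<forall>v\<in>{0..<n}. \<exists>C\<ge>0. \<forall>h. h i = 0 \<longrightarrow> \<bar>h v\<bar> \<le> C * sqrt (dirichlet_form n wE h)"
    using abs_le_dirichlet_form_if_path[OF nonneg] assms(2,3)
    unfolding positively_connected_def by auto
  then obtain Cv where "\<forall>v\<in>{0..<n}. Cv v \<ge> 0 \<and>
      (\<forall>h. h i = 0 \<longrightarrow> \<bar>h v\<bar> \<le> Cv v * sqrt (dirichlet_form n wE h))"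
    by metis
  hence Cv: "\<And>v. v < n \<Longrightarrow> Cv v \<ge> 0"
      "\<And>v h. v < n \<Longrightarrow> h i = 0 \<Longrightarrow> \<bar>h v\<bar> \<le> Cv v * sqrt (dirichlet_form n wE h)"
    by auto
  show ?thesis
  proof (rule that[of "\<Sum>v\<in>{0..<n}. Cv v"])
    show "(\<Sum>v\<in>{0..<n}. Cv v) \<ge> 0" using Cv(1) by (auto intro: sum_nonneg)
    fix v and h :: "nat \<Rightarrow> real" assume v: "v < n" and hi: "h i = 0"
    have "Cv v \<le> (\<Sum>v\<in>{0..<n}. Cv v)" using Cv(1) v by (intro member_le_sum) auto
    hence "Cv v * sqrt (dirichlet_form n wE h) \<le> (\<Sum>v\<in>{0..<n}. Cv v) * sqrt (dirichlet_form n wE h)"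
      using dirichlet_form_nonneg[OF nonneg] by (intro mult_right_mono) auto
    thus "\<bar>h v\<bar> \<le> (\<Sum>v\<in>{0..<n}. Cv v) * sqrt (dirichlet_form n wE h)"
      using Cv(2)[of v h, OF v hi] by linarith
  qed
qed

lemma skip_inj: "inj_on (skip i) A"
  unfolding inj_on_def skip_def by auto

lemma skip_less: "i < n \<Longrightarrow> r < n - 1 \<Longrightarrow> skip i r < n"
  unfolding skip_def by auto

lemma skip_neq: "skip i r \<noteq> i"
  unfolding skip_def by auto

lemma skip_image: "i < n \<Longrightarrow> skip i ` {0..<n-1} = {0..<n} - {i}"
proof (intro equalityI subsetI)
  fix x assume "i < n" "x \<in> skip i ` {0..<n-1}"
  thus "x \<in> {0..<n} - {i}" unfolding skip_def by auto
next
  fix x assume i: "i < n" and x: "x \<in> {0..<n} - {i}"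
  show "x \<in> skip i ` {0..<n-1}"
  proof (cases "x < i")
    case True thus ?thesis using i x by (intro image_eqI[of _ _ x]) (auto simp: skip_def)
  next
    case False thus ?thesis using i x by (intro image_eqI[of _ _ "x - 1"]) (auto simp: skip_def)
  qed
qed

lemma sum_skip:
  assumes "i < n" "f i = 0"
  shows "(\<Sum>r\<in>{0..<n-1}. f (skip i r)) = (\<Sum>l\<in>{0..<n}. f l)"
proof -
  have "(\<Sum>r\<in>{0..<n-1}. f (skip i r)) = (\<Sum>l\<in>{0..<n} - {i}. f l)"
    using sum.reindex[OF skip_inj[of i "{0..<n-1}"], of f] skip_image[OF assms(1)] by simp
  also have "\<dots> = (\<Sum>l\<in>{0..<n}. f l)"
    using assms by (intro sum.mono_neutral_left) auto
  finally show ?thesis .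
qed

lemma dim_del_vec [simp]: "dim_vec (del_vec n i g) = n - 1"
  unfolding del_vec_def by simp

lemma del_vec_carrier [simp]: "del_vec n i g \<in> carrier_vec (n - 1)"
  unfolding del_vec_def by simp

lemma del_vec_index: "r < n - 1 \<Longrightarrow> del_vec n i g $ r = g (skip i r)"
  unfolding del_vec_def by simp

lemma smult_del_vec: "c \<cdot>\<^sub>v del_vec n i f = del_vec n i (\<lambda>k. c * f k)"
  by (intro eq_vecI) (auto simp: del_vec_def)

lemma del_vec_eq_iff:
  assumes "i < n"
  shows "del_vec n i f = del_vec n i h \<longleftrightarrow> (\<forall>k<n. k \<noteq> i \<longrightarrow> f k = h k)"
proof
  assume eq: "del_vec n i f = del_vec n i h"
  show "\<forall>k<n. k \<noteq> i \<longrightarrow> f k = h k"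
  proof (intro allI impI)
    fix k assume "k < n" "k \<noteq> i"
    hence "k \<in> skip i ` {0..<n-1}" using skip_image[OF assms] by simp
    then obtain r where r: "r < n - 1" "k = skip i r" by auto
    show "f k = h k" using arg_cong[OF eq, of "\<lambda>x. x $ r"] r by (simp add: del_vec_index)
  qed
qed (auto intro!: eq_vecI simp: del_vec_index skip_less[OF assms] skip_neq)

lemma del_vec_eq_0_iff:
  assumes "i < n"
  shows "del_vec n i g = 0\<^sub>v (n - 1) \<longleftrightarrow> (\<forall>k<n. k \<noteq> i \<longrightarrow> g k = 0)"
proof -
  have "0\<^sub>v (n - 1) = del_vec n i (\<lambda>_. 0)" by (intro eq_vecI) (auto simp: del_vec_def)
  thus ?thesis using del_vec_eq_iff[OF assms] by simp
qed

definition ins_zero :: "nat \<Rightarrow> 'a :: zero vec \<Rightarrow> nat \<Rightarrow> 'a" where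
  "ins_zero i x k = (if k < i then x $ k else if i < k then x $ (k - 1) else 0)"

lemma ins_zero_at [simp]: "ins_zero i x i = 0"
  unfolding ins_zero_def by simp

lemma del_vec_ins_zero: "x \<in> carrier_vec (n - 1) \<Longrightarrow> del_vec n i (ins_zero i x) = x"
  by (intro eq_vecI) (auto simp: del_vec_def ins_zero_def skip_def)

lemma del_rc_carrier: "A \<in> carrier_mat n n \<Longrightarrow> del_rc i A \<in> carrier_mat (n - 1) (n - 1)"
  unfolding del_rc_def by simp

lemma del_rc_mult_del_vec:
  assumes A: "A \<in> carrier_mat n n" and i: "i < n" and gi: "g i = 0"
  shows "del_rc i A *\<^sub>v del_vec n i g = del_vec n i (\<lambda>k. \<Sum>l\<in>{0..<n}. A $$ (k, l) * g l)"
proof (rule eq_vecI)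
  fix r assume "r < dim_vec (del_vec n i (\<lambda>k. \<Sum>l\<in>{0..<n}. A $$ (k, l) * g l))"
  hence r: "r < n - 1" by simp
  have "(del_rc i A *\<^sub>v del_vec n i g) $ r = (\<Sum>c\<in>{0..<n-1}. A $$ (skip i r, skip i c) * g (skip i c))"
    using A r by (simp add: del_rc_def del_vec_def mult_mat_vec_def scalar_prod_def)
  also have "\<dots> = (\<Sum>l\<in>{0..<n}. A $$ (skip i r, l) * g l)"
    by (rule sum_skip[where f="\<lambda>l. A $$ (skip i r, l) * g l", OF i]) (simp add: gi)
  finally show "(del_rc i A *\<^sub>v del_vec n i g) $ r = del_vec n i (\<lambda>k. \<Sum>l\<in>{0..<n}. A $$ (k, l) * g l) $ r"
    using r by (simp add: del_vec_index)
qed (use A in \<open>simp add: del_rc_def\<close>)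

lemma laplacian_mult_del_vec:
  assumes i: "i < n" and gi: "g i = 0"
  shows "del_rc i (laplacian n wE) *\<^sub>v del_vec n i g = del_vec n i (laplace_op n wE g)"
proof -
  have "(\<Sum>l\<in>{0..<n}. laplacian n wE $$ (k, l) * g l) = laplace_op n wE g k" if "k < n" for k
  proof -
    have "(\<Sum>l\<in>{0..<n}. laplacian n wE $$ (k, l) * g l)
        = (\<Sum>l\<in>{0..<n}. (if k = l then (\<Sum>m\<in>{0..<n}. wE k m) * g l else 0)) - (\<Sum>l\<in>{0..<n}. wE k l * g l)"
      unfolding sum_subtractf[symmetric] using that
      by (intro sum.cong refl) (auto simp: laplacian_def algebra_simps)
    also have "\<dots> = laplace_op n wE g k"
      using that unfolding laplace_op_def right_diff_distrib sum_subtractf sum_distrib_right by simp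
    finally show ?thesis .
  qed
  hence "del_vec n i (\<lambda>k. \<Sum>l\<in>{0..<n}. laplacian n wE $$ (k, l) * g l) = del_vec n i (laplace_op n wE g)"
    using del_vec_eq_iff[OF i] by simp
  moreover have "laplacian n wE \<in> carrier_mat n n" by (simp add: laplacian_def)
  ultimately show ?thesis using del_rc_mult_del_vec[OF _ i, of _ g, OF _ gi] by simp
qed

lemma vweight_mat_mult_del_vec:
  assumes i: "i < n" and gi: "g i = 0"
  shows "del_rc i (vweight_mat n wV) *\<^sub>v del_vec n i g = del_vec n i (\<lambda>k. wV k * g k)"
proof -
  have "(\<Sum>l\<in>{0..<n}. vweight_mat n wV $$ (k, l) * g l) = wV k * g k" if "k < n" for k
    using that by (simp add: vweight_mat_def if_distrib[where f="\<lambda>x. x * _"] cong: if_cong)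
  hence "del_vec n i (\<lambda>k. \<Sum>l\<in>{0..<n}. vweight_mat n wV $$ (k, l) * g l) = del_vec n i (\<lambda>k. wV k * g k)"
    using del_vec_eq_iff[OF i] by simp
  moreover have "vweight_mat n wV \<in> carrier_mat n n" by (simp add: vweight_mat_def)
  ultimately show ?thesis using del_rc_mult_del_vec[OF _ i, of _ g, OF _ gi] by simp
qed


lemma finite_eigenvalues:
  assumes "(A :: 'a :: field mat) \<in> carrier_mat n n"
  shows "finite {c. eigenvalue A c}"
proof -
  have "char_poly A \<noteq> 0" using degree_monic_char_poly[OF assms] by auto
  thus ?thesis unfolding eigenvalue_root_char_poly[OF assms] by (rule poly_roots_finite)
qed

lemma mat_inverse_if_det_nonzero:
  assumes A: "(A :: 'a :: field mat) \<in> carrier_mat n n" and det: "det A \<noteq> 0"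
  shows "A * the (mat_inverse A) = 1\<^sub>m n \<and> the (mat_inverse A) * A = 1\<^sub>m n
    \<and> the (mat_inverse A) \<in> carrier_mat n n"
proof -
  have "A \<in> Units (ring_mat TYPE('a) n undefined)" by (rule det_non_zero_imp_unit[OF A det])
  then obtain B where "mat_inverse A = Some B" using mat_inverse(1)[OF A] by fastforce
  thus ?thesis using mat_inverse(2)[OF A] by simp
qed

lemma inverse_mult_mat_vec_eq_smult_iff:
  fixes A B W :: "'a :: field mat"
  assumes A: "A \<in> carrier_mat n n" and B: "B \<in> carrier_mat n n" and W: "W \<in> carrier_mat n n"
    and AB: "A * B = 1\<^sub>m n" and BA: "B * A = 1\<^sub>m n" and x: "x \<in> carrier_vec n"
  shows "(B * W) *\<^sub>v x = c \<cdot>\<^sub>v x \<longleftrightarrow> W *\<^sub>v x = c \<cdot>\<^sub>v (A *\<^sub>v x)"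
proof -
  have BW: "(B * W) *\<^sub>v x = B *\<^sub>v (W *\<^sub>v x)" using B W x by simp
  have AB_cancel: "A *\<^sub>v (B *\<^sub>v y) = y" if "y \<in> carrier_vec n" for y
    using A B that by (simp add: assoc_mult_mat_vec[symmetric] AB one_mult_mat_vec)
  have BA_cancel: "B *\<^sub>v (A *\<^sub>v y) = y" if "y \<in> carrier_vec n" for y
    using A B that by (simp add: assoc_mult_mat_vec[symmetric] BA one_mult_mat_vec)
  show ?thesis
  proof
    assume eigen: "(B * W) *\<^sub>v x = c \<cdot>\<^sub>v x"
    have "W *\<^sub>v x = A *\<^sub>v (B *\<^sub>v (W *\<^sub>v x))" using W x by (simp add: AB_cancel)
    also have "\<dots> = A *\<^sub>v (c \<cdot>\<^sub>v x)" using eigen by (simp add: BW)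
    also have "\<dots> = c \<cdot>\<^sub>v (A *\<^sub>v x)" by (rule mult_mat_vec[OF A x])
    finally show "W *\<^sub>v x = c \<cdot>\<^sub>v (A *\<^sub>v x)" .
  next
    assume "W *\<^sub>v x = c \<cdot>\<^sub>v (A *\<^sub>v x)"
    hence "(B * W) *\<^sub>v x = B *\<^sub>v (c \<cdot>\<^sub>v (A *\<^sub>v x))" by (simp add: BW)
    also have "\<dots> = c \<cdot>\<^sub>v (B *\<^sub>v (A *\<^sub>v x))" using A B x by (intro mult_mat_vec) auto
    also have "\<dots> = c \<cdot>\<^sub>v x" using x by (simp add: BA_cancel)
    finally show "(B * W) *\<^sub>v x = c \<cdot>\<^sub>v x" .
  qed
qed

lemma linear_coeff_eq_0_if_quadratic_nonneg:
  fixes a b :: real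
  assumes "\<And>t. 2 * t * a + t^2 * b \<ge> 0"
  shows "a = 0"
proof (rule ccontr)
  assume a: "a \<noteq> 0"
  define c where "c = \<bar>b\<bar> + 1"
  have c: "c > 0" "b \<le> c" unfolding c_def by auto
  have "a^2 * b \<le> a^2 * c" using c by (simp add: mult_left_mono)
  moreover have "a^2 * c > 0" using a c by simp
  ultimately have "(- 2 * a^2 * c + a^2 * b) / c^2 < 0" using c by (simp add: divide_neg_pos)
  also have "(- 2 * a^2 * c + a^2 * b) / c^2 = 2 * (- a / c) * a + (- a / c)^2 * b"
    using c by (simp add: field_simps power2_eq_square)
  finally show False using assms[of "- a / c"] by simp
qed

lemma compact_box_inter_wsq_norm_sphere:
  "compact (PiE UNIV (\<lambda>j. if j \<in> A then {-B..B} else {0::real}) \<inter> {f. wsq_norm n wV f = 1})"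
proof (rule compact_Int_closed)
  have "compactin (product_topology (\<lambda>_. euclidean) UNIV)
      (PiE UNIV (\<lambda>j. if j \<in> A then {-B..B} else {0::real}))"
    unfolding compactin_PiE by auto
  thus "compact (PiE UNIV (\<lambda>j. if j \<in> A then {-B..B} else {0::real}))"
    unfolding euclidean_product_topology by simp
  show "closed {f. wsq_norm n wV f = 1}"
    by (rule closed_Collect_eq[OF continuous_on_wsq_norm continuous_on_const])
qed

locale rooted_graph =
  fixes n i :: nat and wE :: "nat \<Rightarrow> nat \<Rightarrow> real" and wV :: "nat \<Rightarrow> real"
  assumes root_less: "i < n"
    and wE_sym: "\<And>u v. u < n \<Longrightarrow> v < n \<Longrightarrow> wE u v = wE v u"
    and wE_nonneg: "\<And>u v. u < n \<Longrightarrow> v < n \<Longrightarrow> wE u v \<ge> 0"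
    and wV_nonneg: "\<And>u. u < n \<Longrightarrow> wV u \<ge> 0"
    and connected: "positively_connected n wE"
begin

abbreviation "Q \<equiv> dirichlet_form n wE"
abbreviation "N \<equiv> wsq_norm n wV"
abbreviation "Li \<equiv> del_rc i (laplacian n wE)"
abbreviation "Mi \<equiv> the (mat_inverse Li) * del_rc i (vweight_mat n wV)"

lemma dirichlet_form_pos:
  assumes "h i = 0" "k < n" "h k \<noteq> 0"
  shows "Q h > 0"
proof -
  obtain C where "\<And>v h. v < n \<Longrightarrow> h i = 0 \<Longrightarrow> \<bar>h v\<bar> \<le> C * sqrt (Q h)"
    using positively_connected_abs_le_dirichlet_form[OF wE_nonneg connected root_less] by blast
  hence "0 < C * sqrt (Q h)" using assms by (metis zero_less_abs_iff order_less_le_trans)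
  hence "Q h \<noteq> 0" by auto
  thus ?thesis using dirichlet_form_nonneg[OF wE_nonneg] by (simp add: order_less_le)
qed

lemma Li_carrier: "Li \<in> carrier_mat (n - 1) (n - 1)"
  by (rule del_rc_carrier) (simp add: laplacian_def)

lemma Wi_carrier: "del_rc i (vweight_mat n wV) \<in> carrier_mat (n - 1) (n - 1)"
  by (rule del_rc_carrier) (simp add: vweight_mat_def)

lemma det_Li_nonzero: "det Li \<noteq> 0"
proof
  assume "det Li = 0"
  then obtain v where v: "v \<in> carrier_vec (n - 1)" "v \<noteq> 0\<^sub>v (n - 1)" "Li *\<^sub>v v = 0\<^sub>v (n - 1)"
    using det_0_iff_vec_prod_zero[OF Li_carrier] by blast
  define g where "g = ins_zero i v"
  have gi: "g i = 0" and v_eq: "del_vec n i g = v"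
    unfolding g_def using del_vec_ins_zero[OF v(1)] by simp_all
  have "del_vec n i (laplace_op n wE g) = 0\<^sub>v (n - 1)"
    using laplacian_mult_del_vec[where g=g, OF root_less gi] v_eq v(3) by simp
  hence "\<forall>k<n. k \<noteq> i \<longrightarrow> laplace_op n wE g k = 0" using del_vec_eq_0_iff[OF root_less] by blast
  hence "Q g = 0"
    using gi by (auto simp: dirichlet_form_eq_sum_laplace_op[of n wE, OF wE_sym] intro!: sum.neutral)
  moreover obtain k where "k < n" "g k \<noteq> 0"
    using v(2) v_eq del_vec_eq_0_iff[OF root_less] by auto
  ultimately show False using dirichlet_form_pos[of g, OF gi] by fastforce
qed

lemma Li_inverse:
  "Li * the (mat_inverse Li) = 1\<^sub>m (n - 1) \<and> the (mat_inverse Li) * Li = 1\<^sub>m (n - 1)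
    \<and> the (mat_inverse Li) \<in> carrier_mat (n - 1) (n - 1)"
  by (rule mat_inverse_if_det_nonzero[OF Li_carrier det_Li_nonzero])

lemma Mi_carrier: "Mi \<in> carrier_mat (n - 1) (n - 1)"
  using Li_inverse Wi_carrier by auto

lemma eigenvector_Mi_iff:
  assumes gi: "g i = 0"
  shows "eigenvector Mi (del_vec n i g) c \<longleftrightarrow>
    (\<exists>k<n. k \<noteq> i \<and> g k \<noteq> 0) \<and> (\<forall>k<n. k \<noteq> i \<longrightarrow> wV k * g k = c * laplace_op n wE g k)"
proof -
  have "del_vec n i g \<noteq> 0\<^sub>v (n - 1) \<longleftrightarrow> (\<exists>k<n. k \<noteq> i \<and> g k \<noteq> 0)"
    using del_vec_eq_0_iff[OF root_less] by blast
  moreover have "Mi *\<^sub>v del_vec n i g = c \<cdot>\<^sub>v del_vec n i g \<longleftrightarrow>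
      del_rc i (vweight_mat n wV) *\<^sub>v del_vec n i g = c \<cdot>\<^sub>v (Li *\<^sub>v del_vec n i g)"
    using Li_inverse
    by (intro inverse_mult_mat_vec_eq_smult_iff[OF Li_carrier _ Wi_carrier _ _ del_vec_carrier]) auto
  moreover have "\<dots> \<longleftrightarrow> (\<forall>k<n. k \<noteq> i \<longrightarrow> wV k * g k = c * laplace_op n wE g k)"
    unfolding laplacian_mult_del_vec[where g=g, OF root_less gi]
      vweight_mat_mult_del_vec[where g=g, OF root_less gi] smult_del_vec del_vec_eq_iff[OF root_less] ..
  moreover have "dim_row Mi = n - 1" by (rule carrier_matD(1)[OF Mi_carrier])
  ultimately show ?thesis unfolding eigenvector_def using del_vec_carrier[of n i g] by auto
qed

lemma eigenvalue_MiE: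
  assumes "eigenvalue Mi c"
  obtains h where "h i = 0" "\<exists>k<n. k \<noteq> i \<and> h k \<noteq> 0"
    "\<And>k. k < n \<Longrightarrow> k \<noteq> i \<Longrightarrow> wV k * h k = c * laplace_op n wE h k"
proof -
  obtain y where y: "eigenvector Mi y c" using assms unfolding eigenvalue_def by blast
  hence "y \<in> carrier_vec (n - 1)" using Mi_carrier unfolding eigenvector_def by auto
  hence "eigenvector Mi (del_vec n i (ins_zero i y)) c" using y by (simp add: del_vec_ins_zero)
  moreover have "ins_zero i y i = 0" by simp
  ultimately show ?thesis using eigenvector_Mi_iff[of "ins_zero i y" c] that by blast
qed

lemma minimizer_nonzero:
  assumes "dirichlet_minimizer n wE wV i g"
  obtains k where "k < n" "k \<noteq> i" "g k \<noteq> 0"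
proof -
  have "\<not> (\<forall>k<n. g k = 0)"
  proof
    assume "\<forall>k<n. g k = 0"
    hence "N g = 0" unfolding wsq_norm_def by simp
    with assms show False unfolding dirichlet_minimizer_def by simp
  qed
  with assms that show ?thesis unfolding dirichlet_minimizer_def by auto
qed

lemma minimizer_pos: "dirichlet_minimizer n wE wV i g \<Longrightarrow> Q g > 0"
  by (metis minimizer_nonzero dirichlet_form_pos dirichlet_minimizer_def)

lemma minimizer_rayleigh:
  assumes min: "dirichlet_minimizer n wE wV i g" and hi: "h i = 0"
  shows "Q g * N h \<le> Q h"
proof (cases "N h = 0")
  case True
  thus ?thesis using dirichlet_form_nonneg[of n wE h, OF wE_nonneg] by simp
next
  case False
  hence pos: "N h > 0" using wsq_norm_nonneg[of n wV h, OF wV_nonneg] by simp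
  define c where "c = 1 / sqrt (N h)"
  have c2: "c^2 = 1 / N h" unfolding c_def using pos by (simp add: power_divide)
  have "N (\<lambda>x. c * h x) = 1" unfolding wsq_norm_scale c2 using pos by simp
  hence "Q g \<le> Q (\<lambda>x. c * h x)" using min hi unfolding dirichlet_minimizer_def by simp
  also have "\<dots> = Q h / N h" unfolding dirichlet_form_scale c2 by simp
  finally show ?thesis using pos by (simp add: field_simps)
qed

lemma minimizer_euler_lagrange:
  assumes min: "dirichlet_minimizer n wE wV i g" and k: "k < n" "k \<noteq> i"
  shows "laplace_op n wE g k = Q g * (wV k * g k)"
proof -
  define d where "d = (\<lambda>x::nat. if x = k then 1 else 0 :: real)"
  have d_sum: "(\<Sum>x\<in>{0..<n}. d x * f x) = f k" for f :: "nat \<Rightarrow> real"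
    using k(1) by (simp add: d_def if_distrib[where f="\<lambda>x. x * _"] cong: if_cong)
  have gi: "g i = 0" and N1: "N g = 1" using min unfolding dirichlet_minimizer_def by auto
  \<comment> \<open>the Rayleigh bound along \<open>g + t d\<close> is a quadratic in \<open>t\<close> that is nonnegative
     and vanishes at \<open>t = 0\<close>, so its linear coefficient vanishes\<close>
  have "2 * t * (laplace_op n wE g k - Q g * (wV k * g k)) + t^2 * (Q d - Q g * N d) \<ge> 0" for t
  proof -
    have "Q g * N (\<lambda>x. g x + t * d x) \<le> Q (\<lambda>x. g x + t * d x)"
      using k gi by (intro minimizer_rayleigh[OF min]) (simp add: d_def)
    moreover have "Q (\<lambda>x. g x + t * d x) = Q g + 2 * t * laplace_op n wE g k + t^2 * Q d"
      by (simp only: dirichlet_form_add_scaled[of n wE, OF wE_sym] d_sum)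
    moreover have "N (\<lambda>x. g x + t * d x) = 1 + 2 * t * (wV k * g k) + t^2 * N d"
      by (simp only: wsq_norm_add_scaled d_sum N1)
    ultimately show ?thesis by (simp add: algebra_simps)
  qed
  thus ?thesis using linear_coeff_eq_0_if_quadratic_nonneg by fastforce
qed

lemma minimizer_eigenvector:
  assumes min: "dirichlet_minimizer n wE wV i g"
  shows "eigenvector Mi (del_vec n i g) (1 / Q g)"
proof -
  have "g i = 0" using min unfolding dirichlet_minimizer_def by simp
  moreover have "wV k * g k = 1 / Q g * laplace_op n wE g k" if "k < n" "k \<noteq> i" for k
    using minimizer_euler_lagrange[OF min that] minimizer_pos[OF min] by simp
  ultimately show ?thesis using eigenvector_Mi_iff minimizer_nonzero[OF min] by metis
qed

lemma eigenvalue_le_minimizer: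
  assumes min: "dirichlet_minimizer n wE wV i g" and "eigenvalue Mi c"
  shows "c \<le> 1 / Q g"
proof -
  obtain h k where h: "h i = 0" "k < n" "h k \<noteq> 0"
    and eigen: "\<And>k. k < n \<Longrightarrow> k \<noteq> i \<Longrightarrow> wV k * h k = c * laplace_op n wE h k"
    using eigenvalue_MiE[OF assms(2)] by blast
  have "Q g * (c * Q h) \<le> 1 * Q h"
    using minimizer_rayleigh[of g h, OF min h(1)]
      wsq_norm_eq_if_laplace_eigen[of n wE h i wV c, OF wE_sym h(1) eigen]
    by simp
  hence "Q g * c \<le> 1" using dirichlet_form_pos[OF h] by (simp add: mult.assoc[symmetric])
  thus ?thesis using minimizer_pos[OF min] by (simp add: field_simps mult.commute)
qed

lemma max_eigenvalue_eq_minimizer: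
  assumes min: "dirichlet_minimizer n wE wV i g"
  shows "Max {c. eigenvalue Mi c} = 1 / Q g"
  using finite_eigenvalues[OF Mi_carrier] minimizer_eigenvector[OF min] eigenvalue_le_minimizer[OF min]
  by (intro Max_eqI) (auto simp: eigenvalue_def)

lemma dirichlet_minimizer_exists:
  assumes gi: "g i = 0" and N1: "N g = 1"
  obtains f where "dirichlet_minimizer n wE wV i f"
proof -
  obtain C where C: "C \<ge> 0" "\<And>v h. v < n \<Longrightarrow> h i = 0 \<Longrightarrow> \<bar>h v\<bar> \<le> C * sqrt (Q h)"
    using positively_connected_abs_le_dirichlet_form[OF wE_nonneg connected root_less] by blast
  define B where "B = C * sqrt (Q g)"
  define K where
    "K = PiE UNIV (\<lambda>j. if j \<in> {0..<n} - {i} then {-B..B} else {0::real}) \<inter> {f. N f = 1}"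
  \<comment> \<open>values beyond \<open>n\<close> do not affect \<open>Q\<close> and \<open>N\<close> but are unbounded\<close>
  define trim where "trim h = (\<lambda>j. if j < n then h j else 0)" for h :: "nat \<Rightarrow> real"
  have trim_in_K: "trim h \<in> K" if "h i = 0" "N h = 1" "Q h \<le> Q g" for h
  proof -
    have "h j \<in> {-B..B}" if "j < n" "j \<noteq> i" for j
    proof -
      have "\<bar>h j\<bar> \<le> C * sqrt (Q h)" using C(2) that \<open>h i = 0\<close> by blast
      also have "\<dots> \<le> B" unfolding B_def using C(1) \<open>Q h \<le> Q g\<close> by (intro mult_left_mono) auto
      finally show ?thesis by (auto simp: abs_le_iff)
    qed
    moreover have "N (trim h) = N h" unfolding trim_def by (rule wsq_norm_cong) simp
    ultimately show ?thesis using that unfolding K_def trim_def by auto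
  qed
  have "K \<noteq> {}" using trim_in_K[OF gi N1] by auto
  moreover have "compact K" unfolding K_def by (rule compact_box_inter_wsq_norm_sphere)
  ultimately obtain f where f: "f \<in> K" "\<And>h. h \<in> K \<Longrightarrow> Q f \<le> Q h"
    using continuous_attains_inf[OF _ _ continuous_on_dirichlet_form] by meson
  have "f i = 0" "N f = 1" using f(1) unfolding K_def by (auto dest: PiE_mem[of f _ _ i])
  moreover have "Q f \<le> Q h" if "h i = 0" "N h = 1" for h
  proof (cases "Q h \<le> Q g")
    case True
    have "Q (trim h) = Q h" unfolding trim_def by (rule dirichlet_form_cong) simp
    thus ?thesis using f(2)[OF trim_in_K[OF that True]] by simp
  next
    case False
    have "Q (trim g) = Q g" unfolding trim_def by (rule dirichlet_form_cong) simp
    thus ?thesis using f(2)[OF trim_in_K[OF gi N1]] False by simp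
  qed
  ultimately show ?thesis using that unfolding dirichlet_minimizer_def by blast
qed

lemma dirichlet_minimizer_iff_max_eigenvector:
  assumes gi: "g i = 0" and N1: "N g = 1"
  shows "dirichlet_minimizer n wE wV i g \<longleftrightarrow>
    eigenvector Mi (del_vec n i g) (Max {c. eigenvalue Mi c})"
proof
  assume "dirichlet_minimizer n wE wV i g"
  thus "eigenvector Mi (del_vec n i g) (Max {c. eigenvalue Mi c})"
    using minimizer_eigenvector max_eigenvalue_eq_minimizer by simp
next
  assume eigen: "eigenvector Mi (del_vec n i g) (Max {c. eigenvalue Mi c})"
  obtain f where f: "dirichlet_minimizer n wE wV i f" using dirichlet_minimizer_exists[OF gi N1] .
  have "\<forall>k<n. k \<noteq> i \<longrightarrow> wV k * g k = 1 / Q f * laplace_op n wE g k"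
    using eigen eigenvector_Mi_iff[of g, OF gi] max_eigenvalue_eq_minimizer[OF f] by simp
  hence "N g = 1 / Q f * Q g" using wsq_norm_eq_if_laplace_eigen[of n wE g i wV, OF wE_sym gi] by blast
  hence "Q g = Q f" using N1 minimizer_pos[OF f] by (simp add: field_simps)
  thus "dirichlet_minimizer n wE wV i g" using f gi N1 unfolding dirichlet_minimizer_def by simp
qed

end

theorem lemma6:
  fixes n i :: nat and E :: "nat set set" and wE :: "nat \<Rightarrow> nat \<Rightarrow> real"
    and wV g :: "nat \<Rightarrow> real"
  assumes "simple_graph n E"
    and "i < n"
    and "\<And>u v. u < n \<Longrightarrow> v < n \<Longrightarrow> wE u v = wE v u"
    and "\<And>u v. u < n \<Longrightarrow> v < n \<Longrightarrow> wE u v \<ge> 0"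
    and "\<And>u v. u < n \<Longrightarrow> v < n \<Longrightarrow> {u, v} \<notin> E \<Longrightarrow> wE u v = 0"
    and "\<And>u. u < n \<Longrightarrow> wV u \<ge> 0"
    and "\<exists>u<n. wV u \<noteq> 0"
    and "positively_connected n wE"
    and "g i = 0" and "wnorm n wV g = 1"
  shows "minimizer n E wE wV i g \<longleftrightarrow>
    (let M = the (mat_inverse (del_rc i (laplacian n wE))) * del_rc i (vweight_mat n wV)
     in eigenvector M (del_vec n i g) (Max {k. eigenvalue M k}))"
proof -
  interpret rooted_graph n i wE wV
    using assms(2-4,6,8) by unfold_locales
  have "minimizer n E wE wV i g \<longleftrightarrow> dirichlet_minimizer n wE wV i g"
    by (rule minimizer_iff_dirichlet_minimizer[OF assms(1,3,5)])
  moreover have "wsq_norm n wV g = 1" using assms(10) by (simp add: wnorm_eq_1_iff)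
  ultimately show ?thesis
    unfolding Let_def using dirichlet_minimizer_iff_max_eigenvector[of g, OF assms(9)] by simp
qed

end
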